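(* Let $K$ be a field, $\mathcal A$ a $K$-algebra, $\vartheta$ any one of the four types (left, right, pre-two-sided, two-sided), and $V$ a $K$-subspace of $\mathcal A$ such that every element of $\sqrt V$ is algebraic over $K$. Then $V$ is a $\vartheta$-Mathieu subspace of $\mathcal A$ if and only if $(e)_\vartheta\subseteq V$ for every idempotent $e\in V$.
   Context: All algebras are associative and unital. For a subset $S\subseteq\mathcal A$, $\sqrt S$ is the set of $a\in\mathcal A$ with $a^m\in S$ for all sufficiently large $m$. An idempotent is $e$ with $e^2=e$. Let $V$ be a $K$-subspace of $\mathcal A$. $V$ is a left (resp. right) Mathieu subspace if whenever $a\in\mathcal A$ satisfies $a^m\in V$ for all $m\ge1$, then for every $b\in\mathcal A$ there is $N$ with $ba^m\in V$ (resp. $a^mb\in V$) for all $m\ge N$; pre-two-sided if it is both left and right; two-sided if whenever $a^m\in V$ for all $m\ge1$, for all $b,c\in\mathcal A$ there is $N$ with $ba^mc\in V$ for all $m\ge N$. For $x\in\mathcal A$: $(x)_\vartheta$ is $\mathcal Ax$ if $\vartheta$ = left, $x\mathcal A$ if $\vartheta$ = right, the two-sided ideal generated by $x$ if $\vartheta$ = two-sided, and $x\mathcal A+\mathcal Ax$ if $\vartheta$ = pre-two-sided. *)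

theory Defs
  imports "HOL-Computational_Algebra.Polynomial"
begin

definition is_algebra :: "('k::field \<Rightarrow> 'a::ring_1 \<Rightarrow> 'a) \<Rightarrow> bool" where
  "is_algebra sc \<longleftrightarrow>
     (\<forall>c x y. sc c (x + y) = sc c x + sc c y) \<and>
     (\<forall>c d x. sc (c + d) x = sc c x + sc d x) \<and>
     (\<forall>c d x. sc (c * d) x = sc c (sc d x)) \<and>
     (\<forall>x. sc 1 x = x) \<and>
     (\<forall>c x y. sc c (x * y) = sc c x * y) \<and>
     (\<forall>c x y. sc c (x * y) = x * sc c y)"

definition is_subspace :: "('k::field \<Rightarrow> 'a::ring_1 \<Rightarrow> 'a) \<Rightarrow> 'a set \<Rightarrow> bool" where
  "is_subspace sc V \<longleftrightarrow> 0 \<in> V \<and> (\<forall>x\<in>V. \<forall>y\<in>V. x + y \<in> V) \<and> (\<forall>c. \<forall>x\<in>V. sc c x \<in> V)"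

definition algebraic_over :: "('k::field \<Rightarrow> 'a::ring_1 \<Rightarrow> 'a) \<Rightarrow> 'a \<Rightarrow> bool" where
  "algebraic_over sc a \<longleftrightarrow>
     (\<exists>p::'k poly. p \<noteq> 0 \<and> (\<Sum>i\<le>degree p. sc (coeff p i) (a ^ i)) = 0)"

definition rad :: "'a::monoid_mult set \<Rightarrow> 'a set" where
  "rad S = {a. \<exists>N. \<forall>m\<ge>N. a ^ m \<in> S}"

datatype mtype = LeftT | RightT | PreTwoSidedT | TwoSidedT

definition mathieu :: "mtype \<Rightarrow> 'a::ring_1 set \<Rightarrow> bool" where
  "mathieu t V \<longleftrightarrow> (\<forall>a. (\<forall>m\<ge>1. a ^ m \<in> V) \<longrightarrow>
     (case t of
        LeftT \<Rightarrow> (\<forall>b. \<exists>N. \<forall>m\<ge>N. b * a ^ m \<in> V)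
      | RightT \<Rightarrow> (\<forall>b. \<exists>N. \<forall>m\<ge>N. a ^ m * b \<in> V)
      | PreTwoSidedT \<Rightarrow> (\<forall>b. \<exists>N. \<forall>m\<ge>N. b * a ^ m \<in> V) \<and> (\<forall>b. \<exists>N. \<forall>m\<ge>N. a ^ m * b \<in> V)
      | TwoSidedT \<Rightarrow> (\<forall>b c. \<exists>N. \<forall>m\<ge>N. b * a ^ m * c \<in> V)))"

text \<open>The ideal (x)_t. The two-sided ideal generated by x is the set of finite sums
  of elements b*x*c (over a unital K-algebra this is automatically a K-subspace).\<close>
definition gen_ideal :: "mtype \<Rightarrow> 'a::ring_1 \<Rightarrow> 'a set" where
  "gen_ideal t x = (case t of
        LeftT \<Rightarrow> {a * x | a. True}
      | RightT \<Rightarrow> {x * a | a. True}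
      | PreTwoSidedT \<Rightarrow> {x * a + b * x | a b. True}
      | TwoSidedT \<Rightarrow> {(\<Sum>i<n. b i * x * c i) | (n::nat) b c. True})"

end

theory Submission
  imports Defs
begin

text \<open>Let \<open>a\<close> be algebraic with all positive powers in \<open>V\<close>. Write a nonzero polynomial
  annihilating \<open>a\<close> as \<open>x^r q\<close> with \<open>q(0) \<noteq> 0\<close>. A Bezout identity \<open>u x^(r+1) + v q = 1\<close>
  makes \<open>e = u(a) a^(r+1)\<close> an idempotent with \<open>a^m e = e a^m = a^m\<close> for \<open>m > r\<close>, and \<open>e\<close>
  lies in \<open>V\<close> as a combination of positive powers of \<open>a\<close>. Then \<open>b a^m = (b a^m) e\<close> and
  similarly on the right, so the Mathieu condition for \<open>a\<close> follows once \<open>V\<close> contains the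
  ideal generated by \<open>e\<close>. Conversely, an idempotent \<open>e \<in> V\<close> satisfies \<open>e^m = e\<close>, so the
  Mathieu condition for \<open>e\<close> itself says exactly that \<open>V\<close> contains this ideal.\<close>

lemma bezout_power_left:
  fixes a b :: "'a::comm_ring_1"
  assumes "u * a + v * b = 1"
  shows "\<exists>u' v'. u' * a ^ n + v' * b = 1"
proof (induction n)
  case 0
  show ?case by (intro exI[of _ 1] exI[of _ 0]) simp
next
  case (Suc n)
  then obtain u' v' where "u' * a ^ n + v' * b = 1" by blast
  then have "(u' * a ^ n + v' * b) * (u * a + v * b) = 1"
    using assms by simp
  then have "(u' * u) * a ^ Suc n + (u' * a ^ n * v + v' * (u * a + v * b)) * b = 1"
    by (simp add: algebra_simps)
  then show ?case by blast
qed

lemma X_bezout: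
  fixes q :: "'k::field poly"
  assumes "poly q 0 \<noteq> 0"
  shows "\<exists>u v. u * [:0, 1:] + v * q = 1"
proof -
  obtain c q' where "q = pCons c q'"
    by (cases q)
  then have "c \<noteq> 0" and "q = [:c:] + [:0, 1:] * q'"
    using assms by (simp_all add: pCons_eq_iff)
  then have "(- smult (1 / c) q') * [:0, 1:] + [:1 / c:] * q = 1"
    by (simp add: algebra_simps smult_add_right)
  then show ?thesis by blast
qed

text \<open>Modulo \<open>p\<close>, the polynomial \<open>w = u x^(s+1)\<close> satisfies \<open>x^(s+1) w = x^(s+1)\<close>, hence
  also \<open>w^2 = w\<close>.\<close>

lemma nonzero_poly_dvd_X_power_idempotent:
  fixes p :: "'k::field poly"
  assumes "p \<noteq> 0"
  shows "\<exists>s u. p dvd [:0, 1:] ^ Suc s * (u * [:0, 1:] ^ Suc s - 1)"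
proof -
  \<comment> \<open>kept opaque, since simp rewrites \<open>[:0, 1:] * _\<close> to \<open>pCons 0 _\<close>\<close>
  define x :: "'k poly" where "x = [:0, 1:]"
  obtain r q where p: "p = x ^ r * q" and "\<not> x dvd q"
    using order_decomp[OF assms, of 0] by (auto simp: x_def)
  then have "poly q 0 \<noteq> 0"
    by (simp add: poly_eq_0_iff_dvd x_def)
  then obtain u v where bez: "u * x ^ Suc r + v * q = 1"
    using X_bezout bezout_power_left unfolding x_def by blast
  then have bez': "u * x ^ Suc r - 1 = - (v * q)"
    by (simp add: algebra_simps flip: bez)
  have "x ^ Suc r * (u * x ^ Suc r - 1) = - (x * v) * p"
    unfolding bez' p by (simp add: algebra_simps)
  then show ?thesis
    unfolding x_def by (metis dvd_triv_right)
qed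

lemma idempotent_power:
  assumes "e * e = (e::'a::monoid_mult)" and "m \<ge> 1"
  shows "e ^ m = e"
  using assms(2) by (induction m rule: dec_induct) (simp_all add: assms(1))

lemma subspace_add_mem:
  assumes "is_subspace sc V" and "x \<in> V" and "y \<in> V"
  shows "x + y \<in> V"
  using assms unfolding is_subspace_def by blast

lemma subspace_sum_mem:
  assumes "is_subspace sc V" and "finite I" and "\<And>i. i \<in> I \<Longrightarrow> f i \<in> V"
  shows "sum f I \<in> V"
  using assms(2,3) assms(1) unfolding is_subspace_def by (induction I rule: finite_induct) auto

definition alg_eval :: "('k::field \<Rightarrow> 'a::ring_1 \<Rightarrow> 'a) \<Rightarrow> 'k poly \<Rightarrow> 'a \<Rightarrow> 'a" where
  "alg_eval sc p a = (\<Sum>i\<le>degree p. sc (coeff p i) (a ^ i))"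

lemma algebraic_over_iff_alg_eval:
  "algebraic_over sc a \<longleftrightarrow> (\<exists>p. p \<noteq> 0 \<and> alg_eval sc p a = 0)"
  by (simp add: algebraic_over_def alg_eval_def)

locale k_algebra =
  fixes sc :: "'k::field \<Rightarrow> 'a::ring_1 \<Rightarrow> 'a"
  assumes is_algebra: "is_algebra sc"
begin

lemma scale_add_left: "sc (c + d) x = sc c x + sc d x"
  using is_algebra unfolding is_algebra_def by blast

lemma scale_scale: "sc (c * d) x = sc c (sc d x)"
  using is_algebra unfolding is_algebra_def by blast

lemma scale_one: "sc 1 x = x"
  using is_algebra unfolding is_algebra_def by blast

lemma scale_mult_left: "sc c (x * y) = sc c x * y"
  using is_algebra unfolding is_algebra_def by blast

lemma scale_mult_right: "sc c (x * y) = x * sc c y"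
  using is_algebra unfolding is_algebra_def by blast

lemma scale_zero_left: "sc 0 x = 0"
  using scale_add_left[of 0 0 x] by simp

lemma scale_conv_mult: "sc c x = sc c 1 * x"
  using scale_mult_left[of c 1 x] by simp

lemma scale_one_commute: "sc c 1 * x = x * sc c 1"
  by (metis scale_conv_mult scale_mult_right mult_1_right)

lemma alg_eval_0 [simp]: "alg_eval sc 0 a = 0"
  by (simp add: alg_eval_def scale_zero_left)

lemma alg_eval_pCons: "alg_eval sc (pCons c p) a = sc c 1 + a * alg_eval sc p a"
proof (cases "p = 0")
  case True
  then show ?thesis by (simp add: alg_eval_def scale_zero_left)
next
  case False
  then have "degree (pCons c p) = Suc (degree p)"
    by simp
  then have "alg_eval sc (pCons c p) a = sc c 1 + (\<Sum>i\<le>degree p. sc (coeff p i) (a ^ Suc i))"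
    unfolding alg_eval_def by (simp only: sum.atMost_Suc_shift) simp
  also have "(\<Sum>i\<le>degree p. sc (coeff p i) (a ^ Suc i)) = a * alg_eval sc p a"
    unfolding alg_eval_def sum_distrib_left by (simp add: scale_mult_right)
  finally show ?thesis .
qed

lemma alg_eval_add: "alg_eval sc (p + q) a = alg_eval sc p a + alg_eval sc q a"
proof (induction p arbitrary: q rule: pCons_induct)
  case (pCons c p)
  show ?case
  proof (cases q rule: pCons_cases)
    case (pCons d q')
    then show ?thesis
      using pCons.IH[of q'] by (simp add: alg_eval_pCons scale_add_left algebra_simps)
  qed
qed simp

lemma alg_eval_smult: "alg_eval sc (smult c p) a = sc c 1 * alg_eval sc p a"
proof (induction p rule: pCons_induct)
  case (pCons d p)
  have "a * (sc c 1 * alg_eval sc p a) = sc c 1 * (a * alg_eval sc p a)"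
    by (metis mult.assoc scale_one_commute)
  with pCons.IH show ?case
    by (simp add: alg_eval_pCons scale_scale distrib_left flip: scale_conv_mult)
qed simp

lemma alg_eval_mult: "alg_eval sc (p * q) a = alg_eval sc p a * alg_eval sc q a"
  by (induction p rule: pCons_induct)
    (simp_all add: alg_eval_add alg_eval_smult alg_eval_pCons scale_zero_left algebra_simps)

lemma alg_eval_minus: "alg_eval sc (p - q) a = alg_eval sc p a - alg_eval sc q a"
  using alg_eval_add[of "p - q" q a] by (simp add: algebra_simps)

lemma alg_eval_1 [simp]: "alg_eval sc 1 a = 1"
  using alg_eval_pCons[of 1 0 a] by (simp add: one_pCons scale_one)

lemma alg_eval_X [simp]: "alg_eval sc [:0, 1:] a = a"
  using alg_eval_pCons[of 0 "[:1:]" a] alg_eval_pCons[of 1 0 a] by (simp add: scale_one scale_zero_left)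

lemma alg_eval_X_power [simp]: "alg_eval sc ([:0, 1:] ^ n) a = a ^ n"
  by (induction n) (simp_all only: power_Suc power_0 alg_eval_mult alg_eval_X alg_eval_1)

lemma alg_eval_commute: "alg_eval sc p a * alg_eval sc q a = alg_eval sc q a * alg_eval sc p a"
  by (metis alg_eval_mult mult.commute)

lemma alg_eval_eq_0_dvd:
  assumes "alg_eval sc p a = 0" and "p dvd r"
  shows "alg_eval sc r a = 0"
  using assms by (auto simp: alg_eval_mult elim!: dvdE)

lemma alg_eval_mult_power_mem:
  assumes "is_subspace sc V" and "\<forall>m\<ge>1. a ^ m \<in> V"
  shows "alg_eval sc u a * a ^ Suc k \<in> V"
proof -
  have "alg_eval sc u a * a ^ Suc k = (\<Sum>i\<le>degree u. sc (coeff u i) (a ^ (i + Suc k)))"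
    unfolding alg_eval_def sum_distrib_right by (simp only: power_add scale_mult_left)
  also have "\<dots> \<in> V"
  proof (rule subspace_sum_mem[OF assms(1)])
    fix i
    have "a ^ (i + Suc k) \<in> V"
      using assms(2) by auto
    then show "sc (coeff u i) (a ^ (i + Suc k)) \<in> V"
      using assms(1) unfolding is_subspace_def by blast
  qed simp
  finally show ?thesis .
qed

lemma algebraic_imp_idempotent:
  assumes "algebraic_over sc a"
  obtains e u s where "e = alg_eval sc u a * a ^ Suc s" and "e * e = e"
    and "\<And>m. m > s \<Longrightarrow> a ^ m * e = a ^ m" and "\<And>m. m > s \<Longrightarrow> e * a ^ m = a ^ m"
proof -
  obtain p where "p \<noteq> 0" and p: "alg_eval sc p a = 0"
    using assms by (auto simp: algebraic_over_iff_alg_eval)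
  then obtain s u where dvd: "p dvd [:0, 1:] ^ Suc s * (u * [:0, 1:] ^ Suc s - 1)"
    using nonzero_poly_dvd_X_power_idempotent by blast
  define w where "w = u * [:0, 1:] ^ Suc s"
  define e where "e = alg_eval sc w a"
  have e: "e = alg_eval sc u a * a ^ Suc s"
    by (simp only: e_def w_def alg_eval_mult alg_eval_X_power)
  have "alg_eval sc ([:0, 1:] ^ Suc s * (w - 1)) a = 0"
    using alg_eval_eq_0_dvd[OF p dvd] by (simp only: w_def)
  then have "a ^ Suc s * (e - 1) = 0"
    by (simp only: e_def alg_eval_mult alg_eval_minus alg_eval_X_power alg_eval_1)
  then have absorb: "a ^ Suc s * e = a ^ Suc s"
    by (simp add: right_diff_distrib)
  have "w * w - w = u * ([:0, 1:] ^ Suc s * (w - 1))"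
    by (simp only: w_def right_diff_distrib mult.assoc mult_1_right)
  then have "alg_eval sc (w * w - w) a = 0"
    using alg_eval_eq_0_dvd[OF p] dvd_mult[OF dvd[folded w_def]] by simp
  then have "e * e = e"
    by (simp add: e_def alg_eval_mult alg_eval_minus)
  moreover have "a ^ m * e = a ^ m" if "m > s" for m
    using absorb that by (metis Suc_leI le_add_diff_inverse2 mult.assoc power_add)
  moreover have "e * a ^ m = a ^ m * e" for m
    using alg_eval_commute[of w a "[:0, 1:] ^ m"] by (simp add: e_def)
  ultimately show thesis
    using that e by metis
qed

end

definition mathieu_condition :: "mtype \<Rightarrow> 'a::ring_1 set \<Rightarrow> 'a \<Rightarrow> bool" where
  "mathieu_condition t V a \<longleftrightarrow> (case t of
        LeftT \<Rightarrow> (\<forall>b. \<exists>N. \<forall>m\<ge>N. b * a ^ m \<in> V)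
      | RightT \<Rightarrow> (\<forall>b. \<exists>N. \<forall>m\<ge>N. a ^ m * b \<in> V)
      | PreTwoSidedT \<Rightarrow> (\<forall>b. \<exists>N. \<forall>m\<ge>N. b * a ^ m \<in> V) \<and> (\<forall>b. \<exists>N. \<forall>m\<ge>N. a ^ m * b \<in> V)
      | TwoSidedT \<Rightarrow> (\<forall>b c. \<exists>N. \<forall>m\<ge>N. b * a ^ m * c \<in> V))"

lemma mathieu_iff_mathieu_condition:
  "mathieu t V \<longleftrightarrow> (\<forall>a. (\<forall>m\<ge>1. a ^ m \<in> V) \<longrightarrow> mathieu_condition t V a)"
  unfolding mathieu_def mathieu_condition_def ..

definition multiples_in :: "mtype \<Rightarrow> 'a::ring_1 set \<Rightarrow> 'a \<Rightarrow> bool" where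
  "multiples_in t V x \<longleftrightarrow> (case t of
        LeftT \<Rightarrow> (\<forall>b. b * x \<in> V)
      | RightT \<Rightarrow> (\<forall>b. x * b \<in> V)
      | PreTwoSidedT \<Rightarrow> (\<forall>b. b * x \<in> V) \<and> (\<forall>b. x * b \<in> V)
      | TwoSidedT \<Rightarrow> (\<forall>b c. b * x * c \<in> V))"

lemma gen_ideal_subset_iff_multiples_in:
  assumes "is_subspace sc V"
  shows "gen_ideal t x \<subseteq> V \<longleftrightarrow> multiples_in t V x"
proof (cases t)
  case LeftT
  then show ?thesis
    by (auto simp: gen_ideal_def multiples_in_def)
next
  case RightT
  then show ?thesis
    by (auto simp: gen_ideal_def multiples_in_def)
next
  case PreTwoSidedT
  then have ideal: "gen_ideal t x = {x * a + b * x | a b. True}"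
    and multiples: "multiples_in t V x \<longleftrightarrow> (\<forall>b. b * x \<in> V) \<and> (\<forall>b. x * b \<in> V)"
    by (simp_all add: gen_ideal_def multiples_in_def)
  show ?thesis
  proof
    assume sub: "gen_ideal t x \<subseteq> V"
    have "x * b \<in> gen_ideal t x" and "b * x \<in> gen_ideal t x" for b
      unfolding ideal by (rule CollectI, intro exI[of _ b] exI[of _ 0]; simp)
        (rule CollectI, intro exI[of _ 0] exI[of _ b]; simp)
    with sub show "multiples_in t V x"
      unfolding multiples by blast
  next
    assume "multiples_in t V x"
    then show "gen_ideal t x \<subseteq> V"
      unfolding ideal multiples using subspace_add_mem[OF assms] by blast
  qed
next
  case TwoSidedT
  then have ideal: "gen_ideal t x = {(\<Sum>i<n. b i * x * c i) | (n::nat) b c. True}"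
    and multiples: "multiples_in t V x \<longleftrightarrow> (\<forall>b c. b * x * c \<in> V)"
    by (simp_all add: gen_ideal_def multiples_in_def)
  show ?thesis
  proof
    assume sub: "gen_ideal t x \<subseteq> V"
    have "b * x * c \<in> gen_ideal t x" for b c
      unfolding ideal by (rule CollectI, intro exI[of _ 1] exI[of _ "\<lambda>_. b"] exI[of _ "\<lambda>_. c"]) simp
    with sub show "multiples_in t V x"
      unfolding multiples by blast
  next
    assume "multiples_in t V x"
    then have "(\<Sum>i<n. b i * x * c i) \<in> V" for n :: nat and b c
      unfolding multiples by (intro subspace_sum_mem[OF assms]) auto
    then show "gen_ideal t x \<subseteq> V"
      unfolding ideal by blast
  qed
qed

lemma mathieu_imp_idempotent_multiples_in:
  assumes "mathieu t V" and "e \<in> V" and "e * e = e"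
  shows "multiples_in t V e"
proof -
  have "mathieu_condition t V e"
    using assms by (simp add: mathieu_iff_mathieu_condition idempotent_power)
  moreover have eventually: "P e" if eventually_P: "\<exists>N. \<forall>m\<ge>N. P (e ^ m)" for P
  proof -
    obtain N where "\<forall>m\<ge>N. P (e ^ m)"
      using eventually_P by blast
    then have "P (e ^ Suc N)"
      by (simp del: power_Suc)
    then show "P e"
      using idempotent_power[OF assms(3), of "Suc N"] by simp
  qed
  ultimately show ?thesis
    unfolding mathieu_condition_def multiples_in_def
    by (cases t) (auto intro: eventually[where P = "\<lambda>x. _ * x \<in> V"]
        eventually[where P = "\<lambda>x. x * _ \<in> V"] eventually[where P = "\<lambda>x. _ * x * _ \<in> V"])
qed

lemma multiples_in_imp_mathieu_condition:
  assumes "multiples_in t V e"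
    and "\<And>m. m \<ge> N \<Longrightarrow> a ^ m * e = a ^ m" and "\<And>m. m \<ge> N \<Longrightarrow> e * a ^ m = a ^ m"
  shows "mathieu_condition t V a"
proof -
  have left: "b * a ^ m \<in> V" if "\<forall>b. b * e \<in> V" and "m \<ge> N" for b m
    using that assms(2)[of m] by (metis mult.assoc)
  have right: "a ^ m * b \<in> V" if "\<forall>b. e * b \<in> V" and "m \<ge> N" for b m
    using that assms(3)[of m] by (metis mult.assoc)
  have two_sided: "b * a ^ m * c \<in> V" if "\<forall>b c. b * e * c \<in> V" and "m \<ge> N" for b c m
    using that assms(2)[of m] by (metis mult.assoc)
  show ?thesis
    using assms(1) unfolding mathieu_condition_def multiples_in_def
    by (cases t) (auto intro: left right two_sided)
qed

lemma (in k_algebra) idempotent_multiples_in_imp_mathieu: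
  assumes "is_subspace sc V" and "\<forall>a\<in>rad V. algebraic_over sc a"
    and idempotents: "\<forall>e\<in>V. e * e = e \<longrightarrow> multiples_in t V e"
  shows "mathieu t V"
  unfolding mathieu_iff_mathieu_condition
proof (intro allI impI)
  fix a
  assume powers: "\<forall>m\<ge>1. a ^ m \<in> V"
  then have "algebraic_over sc a"
    using assms(2) by (auto simp: rad_def)
  then obtain e u s where e: "e = alg_eval sc u a * a ^ Suc s" "e * e = e"
    and absorb: "\<And>m. m > s \<Longrightarrow> a ^ m * e = a ^ m" "\<And>m. m > s \<Longrightarrow> e * a ^ m = a ^ m"
    by (rule algebraic_imp_idempotent) blast
  have "e \<in> V"
    using alg_eval_mult_power_mem[OF assms(1) powers] e(1) by simp
  then have "multiples_in t V e"
    using idempotents e(2) by blast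
  then show "mathieu_condition t V a"
    using absorb by (rule multiples_in_imp_mathieu_condition[where N = "Suc s"]) auto
qed

theorem theorem4p2:
  fixes sc :: "'k::field \<Rightarrow> 'a::ring_1 \<Rightarrow> 'a"
    and t :: mtype and V :: "'a set"
  assumes "is_algebra sc"
    and "is_subspace sc V"
    and "\<forall>a\<in>rad V. algebraic_over sc a"
  shows "mathieu t V \<longleftrightarrow> (\<forall>e\<in>V. e * e = e \<longrightarrow> gen_ideal t e \<subseteq> V)"
proof -
  interpret k_algebra sc
    by (rule k_algebra.intro) (fact assms(1))
  have "mathieu t V \<longleftrightarrow> (\<forall>e\<in>V. e * e = e \<longrightarrow> multiples_in t V e)"
    using mathieu_imp_idempotent_multiples_in idempotent_multiples_in_imp_mathieu[OF assms(2,3)]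
    by blast
  then show ?thesis
    using gen_ideal_subset_iff_multiples_in[OF assms(2)] by simp
qed

end
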